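(* Let $b>0$, $c$ be constants and $m\ge1$ an integer, and let $\phi(s)=\frac{\sqrt{b^2-s^2}}{b}+\sqrt{b^2-s^2}\int_0^s\frac{c\,t^{2m}}{(b^2-t^2)^{3/2}}dt$. On $\mathbb{R}^2\setminus\{0\}$ let $$\alpha=e^{\sigma}\sqrt{(y^1)^2+(y^2)^2},\quad \beta=\frac{b\,e^{\sigma}(x^2y^1-x^1y^2)}{\sqrt{(x^1)^2+(x^2)^2}},\quad \sigma=\Big(m-\frac12\Big)\ln[(x^1)^2+(x^2)^2].$$ Then $F=\alpha\phi(\beta/\alpha)$ is projectively flat and $\beta$ is not closed.
   Context: For a Riemannian metric $\alpha$ and a 1-form $\beta$, $\beta$ is closed if $d\beta=0$. The spray coefficients of a Finsler metric $F$ are $G^i=\frac14 g^{il}\{[F^2]_{x^ky^l}y^k-[F^2]_{x^l}\}$ with $g_{ij}=\frac12[F^2]_{y^iy^j}$. $F$ is projectively flat on an open $U\subset\mathbb{R}^n$ if $G^i=P(x,y)y^i$ in the standard coordinates of $U$ for some function $P$. *)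

theory Defs
  imports "HOL-Analysis.Analysis"
begin

definition pdx :: "2 \<Rightarrow> (real^2 \<Rightarrow> real^2 \<Rightarrow> real) \<Rightarrow> real^2 \<Rightarrow> real^2 \<Rightarrow> real" where
  "pdx k L x y = deriv (\<lambda>t. L (x + t *\<^sub>R axis k 1) y) 0"

definition pdy :: "2 \<Rightarrow> (real^2 \<Rightarrow> real^2 \<Rightarrow> real) \<Rightarrow> real^2 \<Rightarrow> real^2 \<Rightarrow> real" where
  "pdy l L x y = deriv (\<lambda>t. L x (y + t *\<^sub>R axis l 1)) 0"

definition fund_tensor :: "(real^2 \<Rightarrow> real^2 \<Rightarrow> real) \<Rightarrow> real^2 \<Rightarrow> real^2 \<Rightarrow> real^2^2" where
  "fund_tensor F x y = (\<chi> i j. (1/2) * pdy i (pdy j (\<lambda>x y. (F x y)^2)) x y)"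

definition spray :: "(real^2 \<Rightarrow> real^2 \<Rightarrow> real) \<Rightarrow> real^2 \<Rightarrow> real^2 \<Rightarrow> real^2" where
  "spray F x y = (let L = (\<lambda>x y. (F x y)^2); ginv = matrix_inv (fund_tensor F x y) in
     (\<chi> i. (1/4) * (\<Sum>l\<in>UNIV. ginv $ i $ l *
        ((\<Sum>k\<in>UNIV. pdx k (pdy l L) x y * y $ k) - pdx l L x y))))"

definition projectively_flat_on :: "((real^2) \<times> (real^2)) set \<Rightarrow> (real^2 \<Rightarrow> real^2 \<Rightarrow> real) \<Rightarrow> bool" where
  "projectively_flat_on S F \<longleftrightarrow> (\<exists>P. \<forall>(x,y)\<in>S. spray F x y = P x y *\<^sub>R y)"

text \<open>A 1-form beta(x,y) = b_i(x) y^i (coefficients b_i(x) = beta(x,e_i)) is closed on U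
  iff d beta = 0, i.e. d b_j / d x^i = d b_i / d x^j.\<close>
definition oneform_closed_on :: "(real^2) set \<Rightarrow> (real^2 \<Rightarrow> real^2 \<Rightarrow> real) \<Rightarrow> bool" where
  "oneform_closed_on U \<beta> \<longleftrightarrow>
     (\<forall>x\<in>U. \<forall>i j. pdx i (\<lambda>x y. \<beta> x (axis j 1)) x 0 = pdx j (\<lambda>x y. \<beta> x (axis i 1)) x 0)"

definition phi :: "real \<Rightarrow> real \<Rightarrow> nat \<Rightarrow> real \<Rightarrow> real" where
  "phi b c m s = sqrt (b^2 - s^2) / b + sqrt (b^2 - s^2) *
     interval_lebesgue_integral lborel (ereal 0) (ereal s)
       (\<lambda>t. c * t ^ (2*m) / (b^2 - t^2) powr (3/2))"

definition sigma :: "nat \<Rightarrow> real^2 \<Rightarrow> real" where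
  "sigma m x = (real m - 1/2) * ln ((x$1)^2 + (x$2)^2)"

definition alpha :: "nat \<Rightarrow> real^2 \<Rightarrow> real^2 \<Rightarrow> real" where
  "alpha m x y = exp (sigma m x) * sqrt ((y$1)^2 + (y$2)^2)"

definition beta :: "real \<Rightarrow> nat \<Rightarrow> real^2 \<Rightarrow> real^2 \<Rightarrow> real" where
  "beta b m x y = b * exp (sigma m x) * (x$2 * y$1 - x$1 * y$2) / sqrt ((x$1)^2 + (x$2)^2)"

definition Fmetric :: "real \<Rightarrow> real \<Rightarrow> nat \<Rightarrow> real^2 \<Rightarrow> real^2 \<Rightarrow> real" where
  "Fmetric b c m x y = alpha m x y * phi b c m (beta b m x y / alpha m x y)"

end

theory Submission
  imports Defs
begin

text \<open>
  Writing \<open>s = \<beta>/\<alpha>\<close>, the metric is \<open>F = e\<^sup>\<sigma> |y| \<phi>(s)\<close>, and all its first and second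
  derivatives can be computed in closed form along lines \<open>t \<mapsto> (x + t h\<^sub>x, y + t h\<^sub>y)\<close>.
  Together with the Euler relations of the 1-homogeneous function \<open>F(x, \<cdot>)\<close>, Hamel's equation
  \<open>F\<^bsub>x\<^sup>ky\<^sup>l\<^esub> y\<^sup>k = F\<^bsub>x\<^sup>l\<^esub>\<close> forces the spray to be \<open>G\<^sup>i = (F\<^bsub>x\<^sup>k\<^esub> y\<^sup>k / 2F) y\<^sup>i\<close>.
  Hamel's equation for \<open>F\<close> follows from the linear ODE \<open>(b\<^sup>2 - s\<^sup>2) \<phi>' + s \<phi> = c s\<^sup>2\<^sup>m\<close> satisfied
  by \<open>\<phi>\<close> and from Lagrange's identity \<open>\<langle>x,y\<rangle>\<^sup>2 + (x \<times> y)\<^sup>2 = |x|\<^sup>2 |y|\<^sup>2\<close>.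
  The form \<open>\<beta>\<close> is not closed: at \<open>x = e\<^sub>1\<close> the derivatives \<open>\<partial>\<^sub>1 \<beta>(\<cdot>, e\<^sub>2)\<close> and
  \<open>\<partial>\<^sub>2 \<beta>(\<cdot>, e\<^sub>1)\<close> are \<open>-(2m - 1) b\<close> and \<open>b\<close>.
\<close>

section \<open>Spray coefficients from derivatives along lines\<close>

lemma pdx_pdy_square:
  fixes F :: "real^2 \<Rightarrow> real^2 \<Rightarrow> real"
    and DF :: "real^2 \<Rightarrow> real^2 \<Rightarrow> real^2 \<Rightarrow> real^2 \<Rightarrow> real"
    and D2F :: "real^2 \<Rightarrow> real^2 \<Rightarrow> real^2 \<Rightarrow> real^2 \<Rightarrow> real^2 \<Rightarrow> real^2 \<Rightarrow> real"
  assumes D1: "\<And>x y kx ky. U x y \<Longrightarrow>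
      ((\<lambda>t. F (x + t *\<^sub>R kx) (y + t *\<^sub>R ky)) has_real_derivative DF x y kx ky) (at 0)"
    and D2: "\<And>x y hx hy kx ky. U x y \<Longrightarrow>
      ((\<lambda>t. DF (x + t *\<^sub>R kx) (y + t *\<^sub>R ky) hx hy) has_real_derivative D2F x y hx hy kx ky) (at 0)"
    and U_line: "\<And>x y kx ky. U x y \<Longrightarrow> eventually (\<lambda>t. U (x + t *\<^sub>R kx) (y + t *\<^sub>R ky)) (nhds 0)"
    and "U x y"
  shows "pdx k (\<lambda>x y. (F x y)^2) x y = 2 * F x y * DF x y (axis k 1) 0"
    and "pdy l (\<lambda>x y. (F x y)^2) x y = 2 * F x y * DF x y 0 (axis l 1)"
    and "pdx k (pdy l (\<lambda>x y. (F x y)^2)) x y =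
      2 * (DF x y (axis k 1) 0 * DF x y 0 (axis l 1) + F x y * D2F x y 0 (axis l 1) (axis k 1) 0)"
    and "pdy j (pdy l (\<lambda>x y. (F x y)^2)) x y =
      2 * (DF x y 0 (axis j 1) * DF x y 0 (axis l 1) + F x y * D2F x y 0 (axis l 1) 0 (axis j 1))"
proof -
  have sq: "((\<lambda>t. (F (x + t *\<^sub>R kx) (y + t *\<^sub>R ky))^2) has_real_derivative
      2 * F x y * DF x y kx ky) (at 0)" if "U x y" for x y kx ky
    by (rule DERIV_cong[OF DERIV_power[OF D1[OF that]]]) simp
  have pdy_sq: "pdy l (\<lambda>x y. (F x y)^2) x y = 2 * F x y * DF x y 0 (axis l 1)" if "U x y" for x y
    using DERIV_imp_deriv[OF sq[OF that, of 0 "axis l 1"]] by (simp add: pdy_def)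
  have pdy_sq_line: "((\<lambda>t. pdy l (\<lambda>x y. (F x y)^2) (x + t *\<^sub>R kx) (y + t *\<^sub>R ky))
      has_real_derivative 2 * (DF x y kx ky * DF x y 0 (axis l 1) + F x y * D2F x y 0 (axis l 1) kx ky))
      (at 0)" for kx ky
  proof -
    have ev: "eventually (\<lambda>t. pdy l (\<lambda>x y. (F x y)^2) (x + t *\<^sub>R kx) (y + t *\<^sub>R ky) =
        2 * F (x + t *\<^sub>R kx) (y + t *\<^sub>R ky) * DF (x + t *\<^sub>R kx) (y + t *\<^sub>R ky) 0 (axis l 1)) (nhds 0)"
      using U_line[OF \<open>U x y\<close>, of kx ky] by eventually_elim (rule pdy_sq)
    moreover have "((\<lambda>t. 2 * F (x + t *\<^sub>R kx) (y + t *\<^sub>R ky) * DF (x + t *\<^sub>R kx) (y + t *\<^sub>R ky) 0 (axis l 1))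
        has_real_derivative 2 * (DF x y kx ky * DF x y 0 (axis l 1) + F x y * D2F x y 0 (axis l 1) kx ky))
        (at 0)"
      by (rule DERIV_cong[OF DERIV_mult[OF DERIV_cmult[OF D1] D2]]) (use \<open>U x y\<close> in \<open>simp_all add: algebra_simps\<close>)
    ultimately show ?thesis
      using DERIV_cong_ev[OF refl ev refl] by blast
  qed
  show "pdx k (\<lambda>x y. (F x y)^2) x y = 2 * F x y * DF x y (axis k 1) 0"
    using DERIV_imp_deriv[OF sq[OF \<open>U x y\<close>, of "axis k 1" 0]] by (simp add: pdx_def)
  show "pdy l (\<lambda>x y. (F x y)^2) x y = 2 * F x y * DF x y 0 (axis l 1)"
    using \<open>U x y\<close> by (rule pdy_sq)
  show "pdx k (pdy l (\<lambda>x y. (F x y)^2)) x y =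
      2 * (DF x y (axis k 1) 0 * DF x y 0 (axis l 1) + F x y * D2F x y 0 (axis l 1) (axis k 1) 0)"
    using DERIV_imp_deriv[OF pdy_sq_line[of "axis k 1" 0]] by (simp add: pdx_def)
  show "pdy j (pdy l (\<lambda>x y. (F x y)^2)) x y =
      2 * (DF x y 0 (axis j 1) * DF x y 0 (axis l 1) + F x y * D2F x y 0 (axis l 1) 0 (axis j 1))"
    using DERIV_imp_deriv[OF pdy_sq_line[of 0 "axis j 1"]] by (simp add: pdy_def)
qed

text \<open>Hamel's criterion at a point: \<open>Fx\<close>, \<open>Fy\<close> are the gradients of \<open>F\<close> in \<open>x\<close> and \<open>y\<close>,
  \<open>Fxy$l$k = F\<^bsub>y\<^sup>lx\<^sup>k\<^esub>\<close> and \<open>Fyy$j$i = F\<^bsub>y\<^sup>jy\<^sup>i\<^esub>\<close>.\<close>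

lemma spray_eq_if_hamel:
  fixes F :: "real^2 \<Rightarrow> real^2 \<Rightarrow> real" and Fx Fy :: "real^2" and Fxy Fyy :: "real^2^2"
  assumes "y \<noteq> 0" and inv: "invertible (fund_tensor F x y)"
    and pdx_sq: "\<And>k. pdx k (\<lambda>x y. (F x y)^2) x y = 2 * F x y * Fx$k"
    and pdx_pdy_sq: "\<And>k l. pdx k (pdy l (\<lambda>x y. (F x y)^2)) x y = 2 * (Fx$k * Fy$l + F x y * Fxy$l$k)"
    and pdy_pdy_sq: "\<And>i j. pdy i (pdy j (\<lambda>x y. (F x y)^2)) x y = 2 * (Fy$i * Fy$j + F x y * Fyy$j$i)"
    and euler: "inner Fy y = F x y" "y v* Fyy = 0"
    and hamel: "Fxy *v y = Fx"
  shows "spray F x y = (inner Fx y / (2 * F x y)) *\<^sub>R y"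
proof -
  define g where "g = fund_tensor F x y"
  define v where "v = (\<chi> l. (\<Sum>k\<in>UNIV. pdx k (pdy l (\<lambda>x y. (F x y)^2)) x y * y$k)
                          - pdx l (\<lambda>x y. (F x y)^2) x y)"
  have gy: "g *v y = F x y *\<^sub>R Fy"
  proof -
    have "(g *v y)$i = Fy$i * inner Fy y + F x y * (y v* Fyy)$i" for i
      by (simp add: g_def fund_tensor_def pdy_pdy_sq matrix_vector_mult_def vector_matrix_mult_def
          inner_vec_def sum_2 algebra_simps)
    then show ?thesis
      by (simp add: vec_eq_iff euler mult.commute)
  qed
  moreover have "v = (2 * inner Fx y) *\<^sub>R Fy"
  proof -
    have "v$l = 2 * inner Fx y * Fy$l + 2 * F x y * ((Fxy *v y)$l - Fx$l)" for l
      by (simp add: v_def pdx_pdy_sq pdx_sq matrix_vector_mult_def inner_vec_def sum_2 algebra_simps)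
    then show ?thesis
      by (simp add: vec_eq_iff hamel)
  qed
  moreover have ginv: "matrix_inv g ** g = mat 1"
    using inv unfolding g_def invertible_def matrix_inv_def by (metis (mono_tags, lifting) someI_ex)
  have "F x y \<noteq> 0"
  proof
    assume "F x y = 0"
    with gy have "matrix_inv g *v (g *v y) = 0"
      by simp
    with ginv \<open>y \<noteq> 0\<close> show False
      by (simp add: matrix_vector_mul_assoc)
  qed
  have "Fy = (1 / F x y) *\<^sub>R (g *v y)"
    using gy \<open>F x y \<noteq> 0\<close> by simp
  then have "matrix_inv g *v Fy = (1 / F x y) *\<^sub>R y"
    by (simp add: matrix_vector_mult_scaleR matrix_vector_mul_assoc ginv)
  moreover have "spray F x y = (1/4) *\<^sub>R (matrix_inv g *v v)"
    unfolding spray_def Let_def g_def[symmetric] v_def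
    by (simp add: matrix_vector_mult_def vec_eq_iff sum_distrib_left)
  ultimately show ?thesis
    by (simp add: matrix_vector_mult_scaleR)
qed

section \<open>Planar vectors and derivatives along lines\<close>

definition cross2 :: "real^2 \<Rightarrow> real^2 \<Rightarrow> real" where
  "cross2 u v = u$2 * v$1 - u$1 * v$2"

lemma inner_real2: "inner u v = u$1 * v$1 + u$2 * v$2" for u v :: "real^2"
  by (simp add: inner_vec_def sum_2)

lemma cross2_self [simp]: "cross2 v v = 0"
  by (simp add: cross2_def)

lemma cross2_zero [simp]: "cross2 0 v = 0" "cross2 v 0 = 0"
  by (simp_all add: cross2_def)

lemma cross2_commute: "cross2 u v = - cross2 v u"
  by (simp add: cross2_def)

lemma norm_real2_sq: "norm v ^ 2 = v$1 ^ 2 + v$2 ^ 2" for v :: "real^2"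
  unfolding power2_norm_eq_inner inner_real2 by (simp add: power2_eq_square)

lemma inner_cross2_lagrange: "inner u v ^ 2 + cross2 u v ^ 2 = norm u ^ 2 * norm v ^ 2"
  unfolding norm_real2_sq inner_real2 cross2_def by algebra

lemma norm_sq_mult_inner:
  "norm v ^ 2 * inner u h = inner u v * inner v h - cross2 u v * cross2 v h"
  unfolding norm_real2_sq inner_real2 cross2_def by algebra

lemma norm_sq_mult_cross2:
  "norm v ^ 2 * cross2 u h = cross2 u v * inner v h + inner u v * cross2 v h"
  unfolding norm_real2_sq inner_real2 cross2_def by algebra

lemma has_real_derivative_inner_line:
  "D = inner k h \<Longrightarrow> ((\<lambda>t. inner (x + t *\<^sub>R k) h) has_real_derivative D) (at 0)"
  by (auto simp: inner_add_left intro!: derivative_eq_intros)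

lemma has_real_derivative_inner_self_line:
  "D = 2 * inner x k \<Longrightarrow> ((\<lambda>t. inner (x + t *\<^sub>R k) (x + t *\<^sub>R k)) has_real_derivative D) (at 0)"
  by (auto simp: inner_add_left inner_add_right inner_commute intro!: derivative_eq_intros)

lemma has_real_derivative_cross2_line:
  "D = cross2 kx y + cross2 x ky \<Longrightarrow>
    ((\<lambda>t. cross2 (x + t *\<^sub>R kx) (y + t *\<^sub>R ky)) has_real_derivative D) (at 0)"
  unfolding cross2_def by (auto intro!: derivative_eq_intros simp: algebra_simps)

lemma has_real_derivative_cross2_left_line:
  "D = cross2 k h \<Longrightarrow> ((\<lambda>t. cross2 (x + t *\<^sub>R k) h) has_real_derivative D) (at 0)"
  unfolding cross2_def by (auto intro!: derivative_eq_intros simp: algebra_simps)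

lemma has_real_derivative_cross2_right_line:
  "D = cross2 h k \<Longrightarrow> ((\<lambda>t. cross2 h (y + t *\<^sub>R k)) has_real_derivative D) (at 0)"
  unfolding cross2_def by (auto intro!: derivative_eq_intros simp: algebra_simps)

text \<open>Convention: \<open>Q_d1 \<dots> h\<close> is the derivative of \<open>Q\<close> in direction \<open>h\<close> and \<open>Q_d2 \<dots> h k\<close> that of
  \<open>Q_d1 \<dots> h\<close> in direction \<open>k\<close>; for functions of \<open>(x, y)\<close> directions are pairs \<open>(h\<^sub>x, h\<^sub>y)\<close>.\<close>

definition norm_d1 :: "real^2 \<Rightarrow> real^2 \<Rightarrow> real" where
  "norm_d1 v h = inner v h / norm v"

definition norm_d2 :: "real^2 \<Rightarrow> real^2 \<Rightarrow> real^2 \<Rightarrow> real" where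
  "norm_d2 v h k = inner k h / norm v - inner v h * inner v k / norm v ^ 3"

lemma has_real_derivative_norm_line:
  assumes "v \<noteq> 0" "D = norm_d1 v k"
  shows "((\<lambda>t. norm (v + t *\<^sub>R k)) has_real_derivative D) (at 0)"
proof -
  have "((\<lambda>t. sqrt (inner (v + t *\<^sub>R k) (v + t *\<^sub>R k))) has_real_derivative
        inverse (sqrt (inner v v)) / 2 * (2 * inner v k)) (at 0)"
    using assms(1) by (auto intro!: derivative_eq_intros has_real_derivative_inner_self_line)
      (use inner_ge_zero[of v] in linarith)
  then show ?thesis
    unfolding norm_eq_sqrt_inner[symmetric]
    by (rule DERIV_cong) (simp add: assms(2) norm_d1_def field_simps)
qed

lemma has_real_derivative_norm_d1_line:
  assumes "v \<noteq> 0" "D = norm_d2 v h k"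
  shows "((\<lambda>t. norm_d1 (v + t *\<^sub>R k) h) has_real_derivative D) (at 0)"
  unfolding norm_d1_def assms(2) norm_d2_def
  by (rule derivative_eq_intros has_real_derivative_inner_line has_real_derivative_norm_line
      refl assms(1))+
    (use assms(1) in \<open>auto simp: norm_d1_def inner_commute field_simps power3_eq_cube\<close>)

definition conf :: "nat \<Rightarrow> real^2 \<Rightarrow> real" where
  "conf m x = exp (sigma m x)"

definition conf_d1 :: "nat \<Rightarrow> real^2 \<Rightarrow> real^2 \<Rightarrow> real" where
  "conf_d1 m x h = (2 * real m - 1) * conf m x * inner x h / inner x x"

definition conf_d2 :: "nat \<Rightarrow> real^2 \<Rightarrow> real^2 \<Rightarrow> real^2 \<Rightarrow> real" where
  "conf_d2 m x h k = (2 * real m - 1) * (conf_d1 m x k * inner x h / inner x x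
     + conf m x * inner k h / inner x x - conf m x * inner x h * 2 * inner x k / (inner x x)^2)"

lemma sigma_eq_ln_inner: "sigma m x = (real m - 1/2) * ln (inner x x)"
  unfolding sigma_def inner_real2 by (simp add: power2_eq_square)

lemma has_real_derivative_conf_line:
  assumes "x \<noteq> 0" "D = conf_d1 m x k"
  shows "((\<lambda>t. conf m (x + t *\<^sub>R k)) has_real_derivative D) (at 0)"
proof -
  have "inner x x > 0"
    using assms(1) by simp
  have "((\<lambda>t. ln (inner (x + t *\<^sub>R k) (x + t *\<^sub>R k))) has_real_derivative
      1 / inner x x * (2 * inner x k)) (at 0)"
    using DERIV_chain2[OF DERIV_ln_divide has_real_derivative_inner_self_line[OF refl]]
      \<open>inner x x > 0\<close> by simp
  then have "((\<lambda>t. exp ((real m - 1/2) * ln (inner (x + t *\<^sub>R k) (x + t *\<^sub>R k))))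
      has_real_derivative exp ((real m - 1/2) * ln (inner x x)) * ((real m - 1/2) *
        (1 / inner x x * (2 * inner x k)))) (at 0)"
    using DERIV_fun_exp DERIV_cmult by fastforce
  then show ?thesis
    unfolding conf_def[abs_def] sigma_eq_ln_inner assms(2) conf_d1_def
    by (rule DERIV_cong) (use \<open>inner x x > 0\<close> in \<open>simp add: field_simps\<close>)
qed

lemma has_real_derivative_conf_d1_line:
  assumes "x \<noteq> 0" "D = conf_d2 m x h k"
  shows "((\<lambda>t. conf_d1 m (x + t *\<^sub>R k) h) has_real_derivative D) (at 0)"
  unfolding conf_d1_def[abs_def] assms(2) conf_d2_def
  by (rule has_real_derivative_inner_line has_real_derivative_inner_self_line
      has_real_derivative_conf_line derivative_eq_intros refl assms(1))+
    (use assms(1) in \<open>auto simp: inner_commute[of k x] conf_d1_def field_simps power2_eq_square\<close>)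

definition ratio :: "real \<Rightarrow> real^2 \<Rightarrow> real^2 \<Rightarrow> real" where
  "ratio b x y = b * cross2 x y / (norm x * norm y)"

definition ratio_d1 :: "real \<Rightarrow> real^2 \<Rightarrow> real^2 \<Rightarrow> real^2 \<Rightarrow> real^2 \<Rightarrow> real" where
  "ratio_d1 b x y hx hy = b * (cross2 hx y + cross2 x hy) / (norm x * norm y)
     - ratio b x y * (norm_d1 x hx / norm x + norm_d1 y hy / norm y)"

definition ratio_d2 ::
    "real \<Rightarrow> real^2 \<Rightarrow> real^2 \<Rightarrow> real^2 \<Rightarrow> real^2 \<Rightarrow> real^2 \<Rightarrow> real^2 \<Rightarrow> real"
  where
  "ratio_d2 b x y hx hy kx ky =
     b * (cross2 hx ky + cross2 kx hy) / (norm x * norm y)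
   - b * (cross2 hx y + cross2 x hy) * (norm_d1 x kx / norm x + norm_d1 y ky / norm y) / (norm x * norm y)
   - ratio_d1 b x y kx ky * (norm_d1 x hx / norm x + norm_d1 y hy / norm y)
   - ratio b x y * (norm_d2 x hx kx / norm x - norm_d1 x hx * norm_d1 x kx / (norm x)^2
                   + norm_d2 y hy ky / norm y - norm_d1 y hy * norm_d1 y ky / (norm y)^2)"

lemma has_real_derivative_ratio_line:
  assumes "x \<noteq> 0" "y \<noteq> 0" "D = ratio_d1 b x y kx ky"
  shows "((\<lambda>t. ratio b (x + t *\<^sub>R kx) (y + t *\<^sub>R ky)) has_real_derivative D) (at 0)"
  unfolding ratio_def[abs_def] assms(3) ratio_d1_def
  by (rule has_real_derivative_cross2_line has_real_derivative_norm_line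
      derivative_eq_intros refl assms(1,2))+
    (use assms(1,2) in \<open>auto simp: ratio_def norm_d1_def field_simps\<close>)

lemma has_real_derivative_ratio_d1_line:
  assumes "x \<noteq> 0" "y \<noteq> 0" "D = ratio_d2 b x y hx hy kx ky"
  shows "((\<lambda>t. ratio_d1 b (x + t *\<^sub>R kx) (y + t *\<^sub>R ky) hx hy) has_real_derivative D) (at 0)"
  unfolding ratio_d1_def[abs_def] assms(3)
  apply (rule DERIV_cong)
   apply (rule has_real_derivative_cross2_line has_real_derivative_cross2_left_line
      has_real_derivative_cross2_right_line has_real_derivative_norm_line
      has_real_derivative_ratio_line has_real_derivative_norm_d1_line
      derivative_eq_intros refl assms(1,2)
      | (simp add: assms(1,2); fail))+
  unfolding ratio_d2_def using assms(1,2) by (simp add: field_simps power2_eq_square)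

section \<open>The function \<open>\<phi>\<close>\<close>

lemma square_less_square_if_abs_less: "\<bar>s\<bar> < b \<Longrightarrow> s ^ 2 < (b::real) ^ 2"
  using abs_le_square_iff[of b s] by auto

lemma has_real_derivative_LBINT_upper:
  fixes f :: "real \<Rightarrow> real"
  assumes f: "continuous_on {-r<..<r} f" and s: "\<bar>s\<bar> < r"
  shows "((\<lambda>u. LBINT t=ereal 0..ereal u. f t) has_real_derivative f s) (at s)"
proof -
  define e where "e = (\<bar>s\<bar> + r) / 2"
  have e: "\<bar>s\<bar> < e" "e < r" "0 \<le> e"
    using s unfolding e_def by auto
  have "continuous_on {-e..e} f"
    using e by (intro continuous_on_subset[OF f]) auto
  with e have "((\<lambda>u. LBINT t=ereal 0..ereal u. f t) has_vector_derivative f s) (at s within {-e..e})"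
    by (intro interval_integral_FTC2) auto
  then have "((\<lambda>u. LBINT t=ereal 0..ereal u. f t) has_vector_derivative f s) (at s within {-e<..<e})"
    by (rule has_vector_derivative_within_subset) auto
  then have "((\<lambda>u. LBINT t=ereal 0..ereal u. f t) has_vector_derivative f s) (at s)"
    using e by (subst (asm) at_within_open) auto
  then show ?thesis
    by (simp add: has_real_derivative_iff_has_vector_derivative)
qed

definition phi_d1 :: "real \<Rightarrow> real \<Rightarrow> nat \<Rightarrow> real \<Rightarrow> real" where
  "phi_d1 b c m s = (c * s ^ (2*m) - s * phi b c m s) / (b^2 - s^2)"

definition phi_d2 :: "real \<Rightarrow> real \<Rightarrow> nat \<Rightarrow> real \<Rightarrow> real" where
  "phi_d2 b c m s = (2 * real m * c * s ^ (2*m - 1) - phi b c m s + s * phi_d1 b c m s) / (b^2 - s^2)"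

lemma powr_three_halves: "0 \<le> a \<Longrightarrow> a powr (3/2) = a * sqrt (a::real)"
  using powr_add[of a 1 "1/2"] powr_half_sqrt[of a] by simp

lemma has_real_derivative_phi_integral:
  assumes s: "\<bar>s\<bar> < b"
  shows "((\<lambda>u. LBINT t=ereal 0..ereal u. c * t ^ (2*m) / (b^2 - t^2) powr (3/2))
    has_real_derivative c * s ^ (2*m) / ((b^2 - s^2) * sqrt (b^2 - s^2))) (at s)"
proof -
  have "continuous_on {-b<..<b} (\<lambda>t. c * t ^ (2*m) / (b^2 - t^2) powr (3/2))"
  proof (intro continuous_intros ballI)
    fix t :: real
    assume "t \<in> {-b<..<b}"
    then have "b^2 - t^2 > 0"
      using square_less_square_if_abs_less[of t b] by auto
    then show "b^2 - t^2 \<noteq> 0" "(b^2 - t^2) powr (3/2) \<noteq> 0"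
      by auto
  qed
  from has_real_derivative_LBINT_upper[OF this s]
  have "((\<lambda>u. LBINT t=ereal 0..ereal u. c * t ^ (2*m) / (b^2 - t^2) powr (3/2))
      has_real_derivative c * s ^ (2*m) / (b^2 - s^2) powr (3/2)) (at s)"
    by simp
  moreover have "b^2 - s^2 \<ge> 0"
    using square_less_square_if_abs_less[OF s] by simp
  ultimately show ?thesis
    by (simp add: powr_three_halves)
qed

lemma has_real_derivative_phi:
  assumes s: "\<bar>s\<bar> < b"
  shows "(phi b c m has_real_derivative phi_d1 b c m s) (at s)"
proof -
  define I where "I = (\<lambda>u. LBINT t=ereal 0..ereal u. c * t ^ (2*m) / (b^2 - t^2) powr (3/2))"
  define q where "q = (\<lambda>u. sqrt (b^2 - u^2))"
  have "b^2 - s^2 > 0"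
    using square_less_square_if_abs_less[OF s] by simp
  then have "q s > 0" "(q s)^2 = b^2 - s^2"
    unfolding q_def by auto
  have "b > 0"
    using s by linarith
  have phi_eq: "phi b c m = (\<lambda>u. q u / b + q u * I u)"
    unfolding phi_def I_def q_def by auto
  have dq: "(q has_real_derivative - s / q s) (at s)"
    unfolding q_def using \<open>b^2 - s^2 > 0\<close>
    by (auto intro!: derivative_eq_intros simp: field_simps)
  have "(phi b c m has_real_derivative
      (- s / q s) / b + ((- s / q s) * I s + c * s ^ (2*m) / ((b^2 - s^2) * q s) * q s)) (at s)"
    unfolding phi_eq
    using has_real_derivative_phi_integral[OF s, of c m, folded I_def q_def]
    by (intro DERIV_add DERIV_cdivide DERIV_mult dq) (simp_all add: q_def)
  moreover have "(- s / q s) / b + ((- s / q s) * I s + c * s ^ (2*m) / ((b^2 - s^2) * q s) * q s)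
      = phi_d1 b c m s"
    unfolding phi_d1_def phi_eq \<open>(q s)^2 = b^2 - s^2\<close>[symmetric]
    using \<open>q s > 0\<close> \<open>b > 0\<close>
    by (simp add: field_simps) (simp add: algebra_simps power2_eq_square power4_eq_xxxx)
  ultimately show ?thesis
    by (rule DERIV_cong)
qed

lemma has_real_derivative_phi_d1:
  assumes s: "\<bar>s\<bar> < b"
  shows "(phi_d1 b c m has_real_derivative phi_d2 b c m s) (at s)"
proof -
  define D where "D = b^2 - s^2"
  have "D \<noteq> 0"
    using square_less_square_if_abs_less[OF s] unfolding D_def by simp
  have e: "c * s ^ (2*m) - s * phi b c m s = phi_d1 b c m s * D"
    using \<open>D \<noteq> 0\<close> unfolding D_def by (simp add: phi_d1_def)
  have "((\<lambda>u. (c * u ^ (2*m) - u * phi b c m u) / (b^2 - u^2)) has_real_derivative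
     ((c * (real (2*m) * s ^ (2*m - Suc 0)) - (s * phi_d1 b c m s + 1 * phi b c m s)) * (b^2 - s^2)
       - (c * s ^ (2*m) - s * phi b c m s) * (0 - real 2 * s ^ (2 - Suc 0)))
     / ((b^2 - s^2) * (b^2 - s^2))) (at s)"
    using \<open>D \<noteq> 0\<close> unfolding D_def
    by (intro DERIV_divide DERIV_diff DERIV_cmult DERIV_pow DERIV_mult' DERIV_ident
        has_real_derivative_phi s DERIV_const) auto
  moreover have "((c * (real (2*m) * s ^ (2*m - Suc 0)) - (s * phi_d1 b c m s + 1 * phi b c m s)) * (b^2 - s^2)
       - (c * s ^ (2*m) - s * phi b c m s) * (0 - real 2 * s ^ (2 - Suc 0)))
     / ((b^2 - s^2) * (b^2 - s^2)) = phi_d2 b c m s"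
    unfolding e phi_d2_def D_def[symmetric] using \<open>D \<noteq> 0\<close> by (simp add: field_simps)
  ultimately show ?thesis
    unfolding phi_d1_def[abs_def] by (rule DERIV_cong)
qed

section \<open>The metric \<open>F\<close>\<close>

lemma norm_real2: "norm v = sqrt (v$1 ^ 2 + v$2 ^ 2)" for v :: "real^2"
  using norm_real2_sq[of v] by (metis norm_ge_zero real_sqrt_unique)

lemma alpha_eq: "alpha m x y = conf m x * norm y"
  by (simp add: alpha_def conf_def norm_real2)

lemma beta_eq: "beta b m x y = b * conf m x * cross2 x y / norm x"
  by (simp add: beta_def conf_def cross2_def norm_real2)

lemma beta_div_alpha: "beta b m x y / alpha m x y = ratio b x y"
  by (simp add: alpha_eq beta_eq ratio_def conf_def)

lemma Fmetric_eq: "Fmetric b c m x y = conf m x * norm y * phi b c m (ratio b x y)"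
  unfolding Fmetric_def beta_div_alpha by (simp add: alpha_eq)

definition F_d1 :: "real \<Rightarrow> real \<Rightarrow> nat \<Rightarrow> real^2 \<Rightarrow> real^2 \<Rightarrow> real^2 \<Rightarrow> real^2 \<Rightarrow> real" where
  "F_d1 b c m x y hx hy =
     conf_d1 m x hx * norm y * phi b c m (ratio b x y)
   + conf m x * norm_d1 y hy * phi b c m (ratio b x y)
   + conf m x * norm y * phi_d1 b c m (ratio b x y) * ratio_d1 b x y hx hy"

definition F_d2 ::
    "real \<Rightarrow> real \<Rightarrow> nat \<Rightarrow> real^2 \<Rightarrow> real^2 \<Rightarrow> real^2 \<Rightarrow> real^2 \<Rightarrow> real^2 \<Rightarrow> real^2 \<Rightarrow> real"
  where
  "F_d2 b c m x y hx hy kx ky =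
     conf_d2 m x hx kx * norm y * phi b c m (ratio b x y)
   + conf_d1 m x hx * norm_d1 y ky * phi b c m (ratio b x y)
   + conf_d1 m x hx * norm y * phi_d1 b c m (ratio b x y) * ratio_d1 b x y kx ky
   + conf_d1 m x kx * norm_d1 y hy * phi b c m (ratio b x y)
   + conf m x * norm_d2 y hy ky * phi b c m (ratio b x y)
   + conf m x * norm_d1 y hy * phi_d1 b c m (ratio b x y) * ratio_d1 b x y kx ky
   + conf_d1 m x kx * norm y * phi_d1 b c m (ratio b x y) * ratio_d1 b x y hx hy
   + conf m x * norm_d1 y ky * phi_d1 b c m (ratio b x y) * ratio_d1 b x y hx hy
   + conf m x * norm y * phi_d2 b c m (ratio b x y) * ratio_d1 b x y kx ky * ratio_d1 b x y hx hy
   + conf m x * norm y * phi_d1 b c m (ratio b x y) * ratio_d2 b x y hx hy kx ky"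

definition admissible :: "real \<Rightarrow> real^2 \<Rightarrow> real^2 \<Rightarrow> bool" where
  "admissible b x y \<longleftrightarrow> x \<noteq> 0 \<and> y \<noteq> 0 \<and> \<bar>ratio b x y\<bar> < b"

lemma has_real_derivative_phi_ratio_line:
  assumes "admissible b x y" "D = phi_d1 b c m (ratio b x y) * ratio_d1 b x y kx ky"
  shows "((\<lambda>t. phi b c m (ratio b (x + t *\<^sub>R kx) (y + t *\<^sub>R ky))) has_real_derivative D) (at 0)"
proof -
  from assms(1) have "x \<noteq> 0" "y \<noteq> 0" "\<bar>ratio b (x + 0 *\<^sub>R kx) (y + 0 *\<^sub>R ky)\<bar> < b"
    by (simp_all add: admissible_def)
  from DERIV_chain2[OF has_real_derivative_phi[OF this(3)]
      has_real_derivative_ratio_line[OF this(1,2) refl]]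
  show ?thesis
    by (simp add: assms(2))
qed

lemma has_real_derivative_phi_d1_ratio_line:
  assumes "admissible b x y" "D = phi_d2 b c m (ratio b x y) * ratio_d1 b x y kx ky"
  shows "((\<lambda>t. phi_d1 b c m (ratio b (x + t *\<^sub>R kx) (y + t *\<^sub>R ky))) has_real_derivative D) (at 0)"
proof -
  from assms(1) have "x \<noteq> 0" "y \<noteq> 0" "\<bar>ratio b (x + 0 *\<^sub>R kx) (y + 0 *\<^sub>R ky)\<bar> < b"
    by (simp_all add: admissible_def)
  from DERIV_chain2[OF has_real_derivative_phi_d1[OF this(3)]
      has_real_derivative_ratio_line[OF this(1,2) refl]]
  show ?thesis
    by (simp add: assms(2))
qed

lemma has_real_derivative_Fmetric_line:
  assumes "admissible b x y"
  shows "((\<lambda>t. Fmetric b c m (x + t *\<^sub>R kx) (y + t *\<^sub>R ky)) has_real_derivative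
    F_d1 b c m x y kx ky) (at 0)"
proof -
  from assms have x: "x \<noteq> 0" and y: "y \<noteq> 0"
    by (simp_all add: admissible_def)
  show ?thesis
    unfolding Fmetric_eq
    apply (rule DERIV_cong)
     apply (rule has_real_derivative_norm_line has_real_derivative_conf_line
        has_real_derivative_phi_ratio_line derivative_eq_intros refl x y assms)+
    by (simp add: F_d1_def algebra_simps)
qed

lemma has_real_derivative_F_d1_line:
  assumes "admissible b x y"
  shows "((\<lambda>t. F_d1 b c m (x + t *\<^sub>R kx) (y + t *\<^sub>R ky) hx hy) has_real_derivative
    F_d2 b c m x y hx hy kx ky) (at 0)"
proof -
  from assms have x: "x \<noteq> 0" and y: "y \<noteq> 0"
    by (simp_all add: admissible_def)
  show ?thesis
    unfolding F_d1_def[abs_def]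
    apply (rule DERIV_cong)
     apply (rule has_real_derivative_norm_line has_real_derivative_conf_line
        has_real_derivative_conf_d1_line has_real_derivative_norm_d1_line
        has_real_derivative_phi_ratio_line has_real_derivative_phi_d1_ratio_line
        has_real_derivative_ratio_d1_line derivative_eq_intros refl x y assms)+
    by (simp add: F_d2_def algebra_simps)
qed

lemma admissible_line:
  assumes "admissible b x y"
  shows "eventually (\<lambda>t. admissible b (x + t *\<^sub>R kx) (y + t *\<^sub>R ky)) (nhds 0)"
proof -
  from assms have x: "x \<noteq> 0" and y: "y \<noteq> 0" and r: "\<bar>ratio b x y\<bar> < b"
    by (auto simp: admissible_def)
  have "((\<lambda>t. x + t *\<^sub>R kx) \<longlongrightarrow> x) (at 0)" "((\<lambda>t. y + t *\<^sub>R ky) \<longlongrightarrow> y) (at 0)"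
    by (auto intro!: tendsto_eq_intros)
  then have "eventually (\<lambda>t. x + t *\<^sub>R kx \<noteq> 0) (at 0)" "eventually (\<lambda>t. y + t *\<^sub>R ky \<noteq> 0) (at 0)"
    using x y by (auto intro: tendsto_imp_eventually_ne)
  moreover have "isCont (\<lambda>t. ratio b (x + t *\<^sub>R kx) (y + t *\<^sub>R ky)) 0"
    by (rule DERIV_isCont[OF has_real_derivative_ratio_line[OF x y refl]])
  then have "((\<lambda>t. \<bar>ratio b (x + t *\<^sub>R kx) (y + t *\<^sub>R ky)\<bar>) \<longlongrightarrow> \<bar>ratio b x y\<bar>) (at 0)"
    by (auto simp: isCont_def intro: tendsto_rabs)
  then have "eventually (\<lambda>t. \<bar>ratio b (x + t *\<^sub>R kx) (y + t *\<^sub>R ky)\<bar> < b) (at 0)"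
    using r by (rule order_tendstoD(2))
  ultimately have "eventually (\<lambda>t. admissible b (x + t *\<^sub>R kx) (y + t *\<^sub>R ky)) (at 0)"
    unfolding admissible_def by eventually_elim auto
  then show ?thesis
    using assms by (simp add: eventually_nhds_conv_at)
qed

lemma F_d1_axis_sum:
  "F_d1 b c m x y (axis 1 1) 0 * h$1 + F_d1 b c m x y (axis 2 1) 0 * h$2 = F_d1 b c m x y h 0"
  "F_d1 b c m x y 0 (axis 1 1) * h$1 + F_d1 b c m x y 0 (axis 2 1) * h$2 = F_d1 b c m x y 0 h"
  unfolding F_d1_def conf_d1_def norm_d1_def ratio_d1_def
  by (simp_all add: axis_def inner_real2 cross2_def algebra_simps add_divide_distrib diff_divide_distrib)

lemma F_d2_axis_sum:
  "F_d2 b c m x y 0 (axis 1 1) 0 k * h$1 + F_d2 b c m x y 0 (axis 2 1) 0 k * h$2 = F_d2 b c m x y 0 h 0 k"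
  "F_d2 b c m x y 0 h (axis 1 1) 0 * k$1 + F_d2 b c m x y 0 h (axis 2 1) 0 * k$2 = F_d2 b c m x y 0 h k 0"
  unfolding F_d2_def conf_d2_def conf_d1_def norm_d1_def norm_d2_def ratio_d1_def ratio_d2_def
  by (simp_all add: axis_def inner_real2 cross2_def algebra_simps add_divide_distrib diff_divide_distrib)

lemma cross2_eq_ratio:
  "x \<noteq> 0 \<Longrightarrow> y \<noteq> 0 \<Longrightarrow> b \<noteq> 0 \<Longrightarrow> cross2 x y = ratio b x y * norm x * norm y / b"
  by (simp add: ratio_def)

lemma F_d1_euler:
  assumes "x \<noteq> 0" "y \<noteq> 0" "b \<noteq> 0"
  shows "F_d1 b c m x y 0 y = Fmetric b c m x y"
  unfolding F_d1_def Fmetric_eq conf_d1_def norm_d1_def ratio_d1_def using assms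
  by (simp add: cross2_eq_ratio[OF assms] power2_norm_eq_inner[symmetric] field_simps power2_eq_square)

lemma F_d2_euler:
  assumes "x \<noteq> 0" "y \<noteq> 0" "b \<noteq> 0"
  shows "F_d2 b c m x y 0 y 0 h = 0"
proof -
  \<comment> \<open>Naming the norms keeps the vector hypotheses \<open>x \<noteq> 0\<close>, \<open>y \<noteq> 0\<close> out of the goal:
    method \<open>algebra\<close> fails on them.\<close>
  define nx ny where "nx = norm x" and "ny = norm y"
  have pos: "nx > 0" "ny > 0"
    using assms by (simp_all add: nx_def ny_def)
  have sq: "inner x x = nx^2" "inner y y = ny^2"
    by (simp_all add: nx_def ny_def power2_norm_eq_inner)
  have cr: "cross2 x y = ratio b x y * nx * ny / b"
    using cross2_eq_ratio[OF assms] by (simp add: nx_def ny_def)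
  show ?thesis
    unfolding F_d2_def conf_d2_def conf_d1_def norm_d1_def norm_d2_def ratio_d1_def ratio_d2_def
      nx_def[symmetric] ny_def[symmetric]
    using pos \<open>b \<noteq> 0\<close>
    apply (simp add: cross2_commute[of h y] inner_commute[of h y])
    apply (simp add: cr sq field_simps)
    apply algebra
    done
qed

lemma F_d2_hamel:
  assumes "admissible b x y" "m \<ge> 1"
  shows "F_d2 b c m x y 0 h y 0 = F_d1 b c m x y h 0"
proof -
  from assms(1) have x: "x \<noteq> 0" and y: "y \<noteq> 0" and r: "\<bar>ratio b x y\<bar> < b"
    by (simp_all add: admissible_def)
  have "b \<noteq> 0"
    using r by linarith
  define nx ny where "nx = norm x" and "ny = norm y"
  have pos: "nx > 0" "ny > 0"
    using x y by (simp_all add: nx_def ny_def)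
  have sq: "inner x x = nx^2" "inner y y = ny^2"
    by (simp_all add: nx_def ny_def power2_norm_eq_inner)
  define S where "S = ratio b x y"
  define W where "W = c * S ^ (2*m - 1)"
  define D where "D = b^2 - S^2"
  have "D \<noteq> 0"
    using square_less_square_if_abs_less[OF r] by (simp add: D_def S_def)
  have "c * S ^ (2*m) = S * W"
    using assms(2) by (simp add: W_def power_eq_if[of S "2*m"])
  then have phi1: "phi_d1 b c m S = (S * W - S * phi b c m S) / D"
    by (simp add: phi_d1_def D_def)
  have phi2: "phi_d2 b c m S = (2 * real m * W - phi b c m S + S * phi_d1 b c m S) / D"
    by (simp add: phi_d2_def D_def W_def)
  have cr: "cross2 x y = S * nx * ny / b"
    using cross2_eq_ratio[OF x y \<open>b \<noteq> 0\<close>] by (simp add: nx_def ny_def S_def)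
  have inner_h: "inner x h = (inner x y * inner y h - cross2 x y * cross2 y h) / ny^2"
    using norm_sq_mult_inner[of y x h] pos by (simp add: ny_def field_simps)
  have cross2_h: "cross2 x h = (cross2 x y * inner y h + inner x y * cross2 y h) / ny^2"
    using norm_sq_mult_cross2[of y x h] pos by (simp add: ny_def field_simps)
  have lagrange: "b^2 * inner x y ^ 2 = nx^2 * ny^2 * D"
    using inner_cross2_lagrange[of x y] pos \<open>b \<noteq> 0\<close>
    by (simp add: cr D_def nx_def ny_def field_simps)
  show ?thesis
    unfolding F_d1_def F_d2_def conf_d2_def conf_d1_def norm_d1_def norm_d2_def ratio_d1_def ratio_d2_def
      nx_def[symmetric] ny_def[symmetric] S_def[symmetric]
    using pos \<open>D \<noteq> 0\<close> \<open>b \<noteq> 0\<close>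
    apply (simp add: inner_h cross2_h cross2_commute[of h y] inner_commute[of h y] inner_commute[of y x])
    apply (simp add: cr sq phi2)
    apply (simp add: phi1)
    apply (simp add: field_simps)
    using lagrange D_def apply algebra
    done
qed

section \<open>Projective flatness and non-closedness\<close>

lemma spray_Fmetric:
  assumes "admissible b x y" "m \<ge> 1" "invertible (fund_tensor (Fmetric b c m) x y)"
  shows "spray (Fmetric b c m) x y = (F_d1 b c m x y y 0 / (2 * Fmetric b c m x y)) *\<^sub>R y"
proof -
  from assms(1) have x: "x \<noteq> 0" and y: "y \<noteq> 0" and "b \<noteq> 0"
    by (auto simp: admissible_def)
  note pd = pdx_pdy_square[where U = "admissible b" and F = "Fmetric b c m"
      and DF = "F_d1 b c m" and D2F = "F_d2 b c m",
      OF has_real_derivative_Fmetric_line has_real_derivative_F_d1_line admissible_line assms(1)]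
  define Fx where "Fx = (\<chi> k. F_d1 b c m x y (axis k 1) 0)"
  define Fy where "Fy = (\<chi> l. F_d1 b c m x y 0 (axis l 1))"
  define Fxy where "Fxy = (\<chi> l k. F_d2 b c m x y 0 (axis l 1) (axis k 1) 0)"
  define Fyy where "Fyy = (\<chi> j i. F_d2 b c m x y 0 (axis j 1) 0 (axis i 1))"
  have "inner Fx y = F_d1 b c m x y y 0"
    using F_d1_axis_sum(1)[of b c m x y y] by (simp add: Fx_def inner_real2 mult.commute)
  moreover have "inner Fy y = Fmetric b c m x y"
    using F_d1_axis_sum(2)[of b c m x y y] F_d1_euler[OF x y \<open>b \<noteq> 0\<close>]
    by (simp add: Fy_def inner_real2 mult.commute)
  moreover have "y v* Fyy = 0"
    using F_d2_axis_sum(1)[of b c m x y _ y] F_d2_euler[OF x y \<open>b \<noteq> 0\<close>]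
    by (simp add: Fyy_def vector_matrix_mult_def vec_eq_iff sum_2 mult.commute)
  moreover have "Fxy *v y = Fx"
    using F_d2_axis_sum(2)[of b c m x y _ y] F_d2_hamel[OF assms(1,2)]
    by (simp add: Fxy_def Fx_def matrix_vector_mult_def vec_eq_iff sum_2 mult.commute)
  ultimately show ?thesis
    using spray_eq_if_hamel[OF y assms(3), of Fx Fy Fxy Fyy] pd
    by (simp add: Fx_def Fy_def Fxy_def Fyy_def algebra_simps)
qed

lemma has_real_derivative_beta_line:
  assumes "x \<noteq> 0"
  shows "((\<lambda>t. beta b m (x + t *\<^sub>R k) h) has_real_derivative
    b * (conf_d1 m x k * cross2 x h / norm x + conf m x * cross2 k h / norm x
      - conf m x * cross2 x h * norm_d1 x k / (norm x)^2)) (at 0)"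
  unfolding beta_eq
  apply (rule DERIV_cong)
   apply (rule has_real_derivative_conf_line has_real_derivative_cross2_left_line
      has_real_derivative_norm_line derivative_eq_intros refl assms | (simp add: assms; fail))+
  using assms by (simp add: field_simps power2_eq_square)

lemma beta_not_closed:
  assumes "b \<noteq> 0" "m \<ge> 1"
  shows "\<not> oneform_closed_on (UNIV - {0}) (beta b m)"
proof
  assume closed: "oneform_closed_on (UNIV - {0}) (beta b m)"
  define e1 e2 :: "real^2" where "e1 = axis 1 1" and "e2 = axis 2 1"
  have "e1 \<noteq> 0"
    by (simp add: e1_def axis_eq_0_iff)
  have e: "e1$1 = 1" "e1$2 = 0" "e2$1 = 0" "e2$2 = 1"
    by (simp_all add: e1_def e2_def axis_def)
  have "norm e1 = 1" "inner e1 e1 = 1" "inner e1 e2 = 0" "conf m e1 = 1"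
    by (simp_all add: norm_real2 inner_real2 conf_def sigma_def e)
  note e1_values = this cross2_def e conf_d1_def norm_d1_def
  have "pdx 1 (\<lambda>x y. beta b m x (axis 2 1)) e1 0 = - (2 * real m - 1) * b"
    unfolding pdx_def e1_def[symmetric] e2_def[symmetric]
    using DERIV_imp_deriv[OF has_real_derivative_beta_line[OF \<open>e1 \<noteq> 0\<close>, of b m e1 e2]]
    by (simp add: e1_values)
  moreover have "pdx 2 (\<lambda>x y. beta b m x (axis 1 1)) e1 0 = b"
    unfolding pdx_def e1_def[symmetric] e2_def[symmetric]
    using DERIV_imp_deriv[OF has_real_derivative_beta_line[OF \<open>e1 \<noteq> 0\<close>, of b m e2 e1]]
    by (simp add: e1_values)
  moreover have "pdx 1 (\<lambda>x y. beta b m x (axis 2 1)) e1 0 = pdx 2 (\<lambda>x y. beta b m x (axis 1 1)) e1 0"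
    using closed \<open>e1 \<noteq> 0\<close> unfolding oneform_closed_on_def by blast
  ultimately show False
    using assms by simp
qed

theorem mainTheorem12:
  fixes b c :: real and m :: nat
  assumes "b > 0" and "m \<ge> 1"
  shows "projectively_flat_on
           {(x, y). x \<noteq> 0 \<and> y \<noteq> 0 \<and> \<bar>beta b m x y / alpha m x y\<bar> < b
                  \<and> invertible (fund_tensor (Fmetric b c m) x y)} (Fmetric b c m)
       \<and> \<not> oneform_closed_on (UNIV - {0}) (beta b m)"
proof
  show "projectively_flat_on
           {(x, y). x \<noteq> 0 \<and> y \<noteq> 0 \<and> \<bar>beta b m x y / alpha m x y\<bar> < b
                  \<and> invertible (fund_tensor (Fmetric b c m) x y)} (Fmetric b c m)"
    unfolding projectively_flat_on_def beta_div_alpha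
    using spray_Fmetric[OF _ assms(2)]
    by (auto intro!: exI[of _ "\<lambda>x y. F_d1 b c m x y y 0 / (2 * Fmetric b c m x y)"]
        simp: admissible_def)
  show "\<not> oneform_closed_on (UNIV - {0}) (beta b m)"
    using assms by (intro beta_not_closed) auto
qed

end
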